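(* Let $\mathbf f:\mathbb{R}/\mathbb{Z}\to\mathbb{R}^n$ satisfy $L_1\,d_{\mathbb{R}/\mathbb{Z}}(\theta,\theta')\le\|\mathbf f(\theta)-\mathbf f(\theta')\|\le L_2\,d_{\mathbb{R}/\mathbb{Z}}(\theta,\theta')$ for all $\theta,\theta'$, with constants $0<L_1\le L_2$. For each $m$ let $0\le\theta_1<\dots<\theta_m<1$ (indices cyclic, $\theta_{k+m}=\theta_k+1$) satisfy the equilateral condition $\|\Delta_k\mathbf f\|=L_m/m$ for $k=1,\dots,m$, where $L_m=\sum_{k=1}^m\|\Delta_k\mathbf f\|$. Then for all sufficiently large $m$ and all integers $i,j$ with $|i-j|\le[\frac m2]$, \[ A_i\|\Delta_i^j\mathbf f\|\ge\frac{L_mL_1}{L_2}\frac{|i-j|-\frac12}{m},\quad A_i\|\Delta_i^{j+1}\mathbf f\|\ge\frac{L_mL_1}{L_2}\frac{|i-j|-\frac12}{m}, \] \[ A_{ij}\|\Delta_i^j\mathbf f\|\ge\frac{L_mL_1}{L_2}\frac{|i-j|-\frac14}{m},\quad A_{ij}\|\Delta_i^{j+1}\mathbf f\|\ge\frac{L_mL_1}{2L_2}\frac{|i-j|}{m}. \]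
   Context: $\Delta_i^j\mathbf f=\mathbf f(\theta_j)-\mathbf f(\theta_i)$, $\Delta_i\mathbf f=\Delta_i^{i+1}\mathbf f$, $\mathbf f$ regarded as $1$-periodic on $\mathbb{R}$; $[x]$ is the integer part. For a doubly indexed sequence $u_{ij}$: $A_i(u)=\frac{u_{ij}+u_{(i+1)j}}2$ and $A_{ij}(u)=\frac{u_{ij}+u_{(i+1)j}+u_{i(j+1)}+u_{(i+1)(j+1)}}4$. Thus e.g. $A_i\|\Delta_i^{j+1}\mathbf f\|=\frac12(\|\Delta_i^{j+1}\mathbf f\|+\|\Delta_{i+1}^{j+1}\mathbf f\|)$ and $A_{ij}\|\Delta_i^{j}\mathbf f\|=\frac14(\|\Delta_i^j\mathbf f\|+\|\Delta_{i+1}^j\mathbf f\|+\|\Delta_i^{j+1}\mathbf f\|+\|\Delta_{i+1}^{j+1}\mathbf f\|)$. *)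

theory Defs
  imports "HOL-Analysis.Analysis"
begin

definition dRZ :: "real \<Rightarrow> real \<Rightarrow> real" where
  "dRZ s t = min (frac (s - t)) (1 - frac (s - t))"

definition Delta :: "(real \<Rightarrow> 'a::real_normed_vector) \<Rightarrow> (int \<Rightarrow> real) \<Rightarrow> int \<Rightarrow> int \<Rightarrow> 'a" where
  "Delta f \<theta> i j = f (\<theta> j) - f (\<theta> i)"

definition Ai :: "(int \<Rightarrow> int \<Rightarrow> real) \<Rightarrow> int \<Rightarrow> int \<Rightarrow> real" where
  "Ai u i j = (u i j + u (i + 1) j) / 2"

definition Aij :: "(int \<Rightarrow> int \<Rightarrow> real) \<Rightarrow> int \<Rightarrow> int \<Rightarrow> real" where
  "Aij u i j = (u i j + u (i + 1) j + u i (j + 1) + u (i + 1) (j + 1)) / 4"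

definition polylen :: "(real \<Rightarrow> 'a::real_normed_vector) \<Rightarrow> (int \<Rightarrow> real) \<Rightarrow> nat \<Rightarrow> real" where
  "polylen f \<theta> m = (\<Sum>k=1..int m. norm (Delta f \<theta> k (k + 1)))"

end

theory Submission
  imports Defs
begin

(* Write s = L_m / m for the common side length and c = L1 s / L2. Since
   s = |Delta_k f| <= L2 d(theta_(k+1), theta_k), every parameter gap theta_(k+1) - theta_k is at
   least s / L2. Summing the gaps along both arcs between theta_i and theta_j gives
   d(theta_i, theta_j) >= (s / L2) |j - i|_m, where |y|_m is the distance from y to mZ, and the
   lower Lipschitz bound turns this into the chord estimate |Delta_i^j f| >= c |j - i|_m.
   Averaging the chord estimate over neighbouring index pairs gives three of the four bounds.
   For A_ij |Delta_i^j f| with |i - j| close to m/2 the shifted indices may pass the antipode,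
   and the chord estimate loses c. There the four vertices f(theta_i), f(theta_(i+1)),
   f(theta_j), f(theta_(j+1)) satisfy, by Cauchy-Schwarz,
     |Delta_i^j|^2 + |Delta_(i+1)^(j+1)|^2 <= |Delta_(i+1)^j|^2 + |Delta_i^(j+1)|^2 + 2 s^2,
   and once 2 L2^2 <= (m - 2) L1^2 the two long diagonals force the other two chords to make
   up for the loss. *)

lemma dRZ_le_diff:
  assumes "t \<le> s"
  shows "dRZ s t \<le> s - t"
proof -
  have "frac (s - t) \<le> s - t"
    using assms by (simp add: frac_def)
  then show ?thesis
    by (simp add: dRZ_def)
qed

lemma dRZ_eq_min:
  assumes "t \<le> s" "s < t + 1"
  shows "dRZ s t = min (s - t) (1 - (s - t))"
  using assms by (simp add: dRZ_def frac_eq)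

lemma four_point_ineq:
  fixes p0 p1 q0 q1 :: "'a::real_inner"
  shows "(norm (q0 - p0))\<^sup>2 + (norm (q1 - p1))\<^sup>2
    \<le> (norm (q0 - p1))\<^sup>2 + (norm (q1 - p0))\<^sup>2 + 2 * norm (p1 - p0) * norm (q1 - q0)"
proof -
  have "(norm (q0 - p0))\<^sup>2 + (norm (q1 - p1))\<^sup>2
      = (norm (q0 - p1))\<^sup>2 + (norm (q1 - p0))\<^sup>2 - 2 * inner (p1 - p0) (q1 - q0)"
    by (simp add: power2_norm_eq_inner inner_commute algebra_simps)
  moreover have "\<bar>inner (p1 - p0) (q1 - q0)\<bar> \<le> norm (p1 - p0) * norm (q1 - q0)"
    by (rule Cauchy_Schwarz_ineq2)
  ultimately show ?thesis
    by linarith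
qed

definition cyclic_abs :: "nat \<Rightarrow> int \<Rightarrow> int" where
  "cyclic_abs m y = min (y mod int m) (int m - y mod int m)"

lemma cyclic_abs_nonneg:
  assumes "0 < m"
  shows "0 \<le> cyclic_abs m y"
  using assms by (simp add: cyclic_abs_def less_imp_le)

lemma cyclic_abs_eq_abs:
  assumes "2 * \<bar>y\<bar> \<le> int m"
  shows "cyclic_abs m y = \<bar>y\<bar>"
proof (cases "0 \<le> y")
  case True
  then have "y mod int m = y"
    using assms by (cases "y = int m") (auto intro: mod_pos_pos_trivial)
  then show ?thesis
    using assms True by (simp add: cyclic_abs_def)
next
  case False
  then have "y mod int m = y + int m"
    using assms mod_pos_pos_trivial[of "y + int m" "int m"] by simp
  then show ?thesis
    using assms False by (simp add: cyclic_abs_def)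
qed

lemma abs_le_abs_diff_mult:
  fixes x q :: int
  assumes "2 * \<bar>x\<bar> \<le> int m"
  shows "\<bar>x\<bar> \<le> \<bar>x - q * int m\<bar>"
proof (cases "q = 0")
  case False
  then have "1 \<le> \<bar>q\<bar>"
    by linarith
  then have "int m \<le> \<bar>q * int m\<bar>"
    by (simp add: abs_mult mult_le_cancel_right1)
  then show ?thesis
    using assms by linarith
qed simp

lemma cyclic_abs_ge:
  assumes "2 * \<bar>x\<bar> \<le> int m"
  shows "\<bar>x\<bar> - \<bar>y - x\<bar> \<le> cyclic_abs m y"
proof (cases "m = 0")
  case True
  then show ?thesis
    using assms by (simp add: cyclic_abs_def, arith)
next
  case False
  define q where "q = y div int m"
  have "y - q * int m = y mod int m"
    unfolding q_def by (rule minus_div_mult_eq_mod)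
  moreover have "0 \<le> y mod int m" "y mod int m < int m"
    using False by simp_all
  ultimately have "cyclic_abs m y = min \<bar>y - q * int m\<bar> \<bar>y - (q + 1) * int m\<bar>"
    unfolding cyclic_abs_def by (simp add: algebra_simps)
  moreover have "\<bar>x\<bar> - \<bar>y - x\<bar> \<le> \<bar>y - q' * int m\<bar>" for q'
    using abs_le_abs_diff_mult[OF assms, of q'] by arith
  ultimately show ?thesis
    by (metis min.boundedI)
qed

lemma four_sum_ge:
  fixes d1 d2 a b T c e :: real
  assumes "T \<le> d1" "T \<le> d2" "T - c \<le> a" "T - c \<le> b" "0 \<le> c" "c \<le> T"
    and sq: "d1\<^sup>2 + d2\<^sup>2 \<le> a\<^sup>2 + b\<^sup>2 + e" and e: "c\<^sup>2 + e \<le> 2 * T * c"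
  shows "4 * T - c \<le> d1 + d2 + a + b"
proof (rule ccontr)
  assume "\<not> ?thesis"
  then have ab: "a + b < 2 * T - c"
    using assms(1,2) by linarith
  define p where "p = a - (T - c)"
  define q where "q = b - (T - c)"
  have pq: "0 \<le> p" "0 \<le> q" "p + q < c"
    using assms ab unfolding p_def q_def by auto
  have "p\<^sup>2 + q\<^sup>2 \<le> (p + q)\<^sup>2"
    using pq by (simp add: power2_eq_square algebra_simps)
  also have "\<dots> < c\<^sup>2"
    using pq by (intro power_strict_mono) auto
  finally have "p\<^sup>2 + q\<^sup>2 < c\<^sup>2" .
  moreover have "(T - c) * (p + q) \<le> (T - c) * c"
    using pq assms(6) by (intro mult_left_mono) auto
  moreover have "a\<^sup>2 + b\<^sup>2 = 2 * (T - c)\<^sup>2 + 2 * (T - c) * (p + q) + p\<^sup>2 + q\<^sup>2"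
    unfolding p_def q_def by (simp add: power2_eq_square algebra_simps)
  ultimately have "a\<^sup>2 + b\<^sup>2 < 2 * T\<^sup>2 - 2 * T * c + c\<^sup>2"
    by (simp add: power2_eq_square algebra_simps)
  moreover have "T\<^sup>2 \<le> d1\<^sup>2" "T\<^sup>2 \<le> d2\<^sup>2"
    using assms by (auto intro!: power_mono)
  ultimately show False
    using sq e by linarith
qed

lemma shift_by_multiple:
  fixes th :: "int \<Rightarrow> 'a::ring_1"
  assumes "\<And>k. th (k + int m) = th k + 1"
  shows "th (k + q * int m) = th k + of_int q"
proof (induction q rule: int_induct[where k = 0])
  case (step1 i)
  then show ?case
    using assms[of "k + i * int m"] by (simp add: algebra_simps)
next
  case (step2 i)
  then show ?case
    using assms[of "k + (i - 1) * int m"] by (simp add: algebra_simps)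
qed simp

locale cyclic_chord_bound =
  fixes u :: "int \<Rightarrow> int \<Rightarrow> real" and c :: real and m :: nat
  assumes c_nonneg: "0 \<le> c"
    and chord_ge: "\<And>a b. c * of_int (cyclic_abs m (b - a)) \<le> u a b"
begin

lemma chord_ge_of_le:
  assumes "N \<le> cyclic_abs m (b - a)"
  shows "c * of_int N \<le> u a b"
proof -
  have "c * of_int N \<le> c * of_int (cyclic_abs m (b - a))"
    using assms c_nonneg by (simp add: mult_left_mono)
  then show ?thesis
    using chord_ge order_trans by blast
qed

lemma Ai_ge:
  assumes "2 * \<bar>i - j\<bar> \<le> int m"
  shows "c * (of_int \<bar>i - j\<bar> - 1/2) \<le> Ai u i j"
proof -
  define x where "x = j - i"
  have x: "2 * \<bar>x\<bar> \<le> int m" "\<bar>i - j\<bar> = \<bar>x\<bar>"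
    using assms unfolding x_def by (simp_all add: abs_minus_commute)
  have "c * of_int \<bar>x\<bar> \<le> u i j"
    using cyclic_abs_eq_abs[OF x(1)] by (intro chord_ge_of_le) (simp add: x_def)
  moreover have "c * of_int (\<bar>x\<bar> - 1) \<le> u (i + 1) j"
    using cyclic_abs_ge[OF x(1), of "x - 1"] by (intro chord_ge_of_le) (simp add: x_def algebra_simps)
  ultimately show ?thesis
    unfolding Ai_def x(2) by (simp add: algebra_simps)
qed

lemma Ai_succ_ge:
  assumes "2 * \<bar>i - j\<bar> \<le> int m"
  shows "c * (of_int \<bar>i - j\<bar> - 1/2) \<le> Ai u i (j + 1)"
proof -
  define x where "x = j - i"
  have x: "2 * \<bar>x\<bar> \<le> int m" "\<bar>i - j\<bar> = \<bar>x\<bar>"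
    using assms unfolding x_def by (simp_all add: abs_minus_commute)
  have "c * of_int (\<bar>x\<bar> - 1) \<le> u i (j + 1)"
    using cyclic_abs_ge[OF x(1), of "x + 1"] by (intro chord_ge_of_le) (simp add: x_def algebra_simps)
  moreover have "c * of_int \<bar>x\<bar> \<le> u (i + 1) (j + 1)"
    using cyclic_abs_eq_abs[OF x(1)] by (intro chord_ge_of_le) (simp add: x_def)
  ultimately show ?thesis
    unfolding Ai_def x(2) by (simp add: algebra_simps)
qed

lemma Aij_succ_ge:
  assumes "4 \<le> m" "2 * \<bar>i - j\<bar> \<le> int m"
  shows "c * of_int \<bar>i - j\<bar> / 2 \<le> Aij u i (j + 1)"
proof -
  define x where "x = j - i"
  define g where "g = cyclic_abs m"
  have x: "2 * \<bar>x\<bar> \<le> int m" "\<bar>i - j\<bar> = \<bar>x\<bar>"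
    using assms unfolding x_def by (simp_all add: abs_minus_commute)
  have g_small: "g y = \<bar>y\<bar>" if "\<bar>y\<bar> \<le> 2" for y
    unfolding g_def using assms(1) that by (intro cyclic_abs_eq_abs) linarith
  have g_ge: "\<bar>x\<bar> - \<bar>t\<bar> \<le> g (x + t)" for t
    using cyclic_abs_ge[OF x(1), of "x + t"] unfolding g_def by simp
  have g_nonneg: "0 \<le> g y" for y
    unfolding g_def using assms(1) by (intro cyclic_abs_nonneg) simp
  have "2 * \<bar>x\<bar> \<le> 2 * g (x + 1) + g x + g (x + 2)"
  proof -
    consider "x = 0" | "x = 1" | "x = -1" | "2 \<le> \<bar>x\<bar>"
      by linarith
    then show ?thesis
    proof cases
      case 4
      then show ?thesis
        using g_ge[of 1] g_ge[of 0] g_ge[of 2] by simp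
    qed (use g_small[of x] g_small[of "x + 1"] g_small[of "x + 2"] g_nonneg in simp_all)
  qed
  then have "c * of_int (2 * \<bar>x\<bar>) \<le> c * of_int (2 * g (x + 1) + g x + g (x + 2))"
    using c_nonneg by (intro mult_left_mono) simp_all
  moreover have "c * of_int (g (x + t)) \<le> u (i + s) (j + s + t)" for s t
    unfolding g_def by (intro chord_ge_of_le) (simp add: x_def algebra_simps)
  from this[where s = 0 and t = 1] this[where s = 1 and t = 0]
    this[where s = 0 and t = 2] this[where s = 1 and t = 1]
  have "c * of_int (2 * g (x + 1) + g x + g (x + 2)) \<le>
      u i (j + 1) + u (i + 1) (j + 1) + u i (j + 2) + u (i + 1) (j + 2)"
    by (simp add: algebra_simps)
  ultimately show ?thesis
    unfolding Aij_def x(2) by (simp add: algebra_simps)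
qed

lemma Aij_ge:
  assumes "2 \<le> m" "2 * \<bar>i - j\<bar> \<le> int m"
    and four_point: "(u i j)\<^sup>2 + (u (i + 1) (j + 1))\<^sup>2 \<le> (u (i + 1) j)\<^sup>2 + (u i (j + 1))\<^sup>2 + e"
    and e_le: "e \<le> (real m - 2) * c\<^sup>2"
  shows "c * (of_int \<bar>i - j\<bar> - 1/4) \<le> Aij u i j"
proof -
  define x where "x = j - i"
  have x: "2 * \<bar>x\<bar> \<le> int m" "\<bar>i - j\<bar> = \<bar>x\<bar>"
    using assms unfolding x_def by (simp_all add: abs_minus_commute)
  have diag: "c * of_int \<bar>x\<bar> \<le> u i j" "c * of_int \<bar>x\<bar> \<le> u (i + 1) (j + 1)"
    using cyclic_abs_eq_abs[OF x(1)] by (intro chord_ge_of_le; simp add: x_def)+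
  have chord_pm: "c * of_int (cyclic_abs m (x - 1)) \<le> u (i + 1) j"
      "c * of_int (cyclic_abs m (x + 1)) \<le> u i (j + 1)"
    by (intro chord_ge_of_le; simp add: x_def algebra_simps)+
  have "c * of_int (4 * \<bar>x\<bar> - 1) \<le> u i j + u (i + 1) (j + 1) + u (i + 1) j + u i (j + 1)"
  proof (cases "2 * \<bar>x\<bar> + 2 \<le> int m")
    case True
    then have "cyclic_abs m (x - 1) = \<bar>x - 1\<bar>" "cyclic_abs m (x + 1) = \<bar>x + 1\<bar>"
      by (intro cyclic_abs_eq_abs; arith)+
    then have "2 * \<bar>x\<bar> - 1 \<le> cyclic_abs m (x - 1) + cyclic_abs m (x + 1)"
      by arith
    then have "c * of_int (2 * \<bar>x\<bar> - 1) \<le> c * of_int (cyclic_abs m (x - 1) + cyclic_abs m (x + 1))"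
      using c_nonneg by (intro mult_left_mono) simp_all
    then have "c * of_int (2 * \<bar>x\<bar> - 1) \<le> u (i + 1) j + u i (j + 1)"
      using chord_pm by (simp add: distrib_left)
    with diag show ?thesis
      by (simp add: algebra_simps)
  next
    case False
    \<comment> \<open>Here i + 1 or j + 1 passes the antipode, and the four-point inequality makes up for the loss.\<close>
    define T where "T = c * of_int \<bar>x\<bar>"
    have "1 \<le> \<bar>x\<bar>"
      using False assms(1) by linarith
    then have "c \<le> T"
      unfolding T_def using c_nonneg mult_left_mono[of 1 "of_int \<bar>x\<bar>" c] by simp
    have "c\<^sup>2 + e \<le> (real m - 1) * c\<^sup>2"
      using e_le by (simp add: algebra_simps)
    also have "\<dots> \<le> (2 * of_int \<bar>x\<bar>) * c\<^sup>2"
      using False by (intro mult_right_mono) simp_all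
    also have "\<dots> = 2 * T * c"
      unfolding T_def by (simp add: power2_eq_square)
    finally have "c\<^sup>2 + e \<le> 2 * T * c" .
    moreover have "c * of_int (\<bar>x\<bar> - 1) \<le> u (i + 1) j" "c * of_int (\<bar>x\<bar> - 1) \<le> u i (j + 1)"
      using cyclic_abs_ge[OF x(1), of "x - 1"] cyclic_abs_ge[OF x(1), of "x + 1"]
      by (intro chord_ge_of_le; simp add: x_def algebra_simps)+
    then have "T - c \<le> u (i + 1) j" "T - c \<le> u i (j + 1)"
      unfolding T_def by (simp_all add: algebra_simps)
    ultimately have "4 * T - c \<le> u i j + u (i + 1) (j + 1) + u (i + 1) j + u i (j + 1)"
      using four_sum_ge[of T "u i j" "u (i + 1) (j + 1)" c "u (i + 1) j" "u i (j + 1)" e]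
        diag four_point c_nonneg \<open>c \<le> T\<close> unfolding T_def by simp
    then show ?thesis
      unfolding T_def by (simp add: algebra_simps)
  qed
  then show ?thesis
    unfolding Aij_def x(2) by (simp add: algebra_simps)
qed

end

locale equilateral_polygon =
  fixes f :: "real \<Rightarrow> 'a::real_inner" and L1 L2 :: real and th :: "int \<Rightarrow> real" and m :: nat
  assumes periodic: "\<And>t. f (t + 1) = f t"
    and L1_pos: "0 < L1" and L1_le_L2: "L1 \<le> L2"
    and bilip: "\<And>s t. L1 * dRZ s t \<le> norm (f s - f t) \<and> norm (f s - f t) \<le> L2 * dRZ s t"
    and first_nonneg: "0 \<le> th 1"
    and incr: "\<And>k. 1 \<le> k \<Longrightarrow> k < int m \<Longrightarrow> th k < th (k + 1)"
    and last_less_1: "th (int m) < 1"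
    and cyclic: "\<And>k. th (k + int m) = th k + 1"
    and equilateral: "\<And>k. 1 \<le> k \<Longrightarrow> k \<le> int m \<Longrightarrow>
      norm (Delta f th k (k + 1)) = polylen f th m / real m"
begin

definition side :: real where
  "side = polylen f th m / real m"

lemma L2_pos: "0 < L2"
  using L1_pos L1_le_L2 by linarith

lemma m_pos: "0 < m"
  using cyclic[of 0] by (cases m) auto

lemma theta_shift: "th (k + q * int m) = th k + of_int q"
  using cyclic by (rule shift_by_multiple)

lemma f_theta_shift: "f (th (k + q * int m)) = f (th k)"
proof -
  interpret periodic_fun_simple' f
    by standard (rule periodic)
  show ?thesis
    using plus_of_int[of "th k" q] by (simp add: theta_shift)
qed

lemma reduce_to_window:
  obtains r q where "k = r + q * int m" "1 \<le> r" "r \<le> int m"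
proof
  show "k = ((k - 1) mod int m + 1) + (k - 1) div int m * int m"
    by simp
  have "0 \<le> (k - 1) mod int m" "(k - 1) mod int m < int m"
    using m_pos by simp_all
  then show "1 \<le> (k - 1) mod int m + 1" "(k - 1) mod int m + 1 \<le> int m"
    by simp_all
qed

lemma theta_step: "th k < th (k + 1)"
proof -
  obtain r q where rq: "k = r + q * int m" "1 \<le> r" "r \<le> int m"
    by (rule reduce_to_window)
  have "th k = th r + of_int q" "th (k + 1) = th (r + 1) + of_int q"
    using theta_shift[of r q] theta_shift[of "r + 1" q] rq(1) by (simp_all add: algebra_simps)
  moreover have "th r < th (r + 1)"
  proof (cases "r < int m")
    case False
    then have "r = int m"
      using rq(3) by simp
    then show ?thesis
      using cyclic[of 1] first_nonneg last_less_1 by (simp add: add.commute)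
  qed (use incr rq in simp)
  ultimately show ?thesis
    by simp
qed

lemma theta_less:
  assumes "a < b"
  shows "th a < th b"
  using assms by (induction b rule: int_gr_induct) (use theta_step order.strict_trans in blast)+

lemma theta_le: "a \<le> b \<Longrightarrow> th a \<le> th b"
  using theta_less by (cases "a = b") (auto intro: less_imp_le)

lemma side_eq: "norm (f (th (k + 1)) - f (th k)) = side"
proof -
  obtain r q where rq: "k = r + q * int m" "1 \<le> r" "r \<le> int m"
    by (rule reduce_to_window)
  have "f (th k) = f (th r)" "f (th (k + 1)) = f (th (r + 1))"
    using f_theta_shift[of r q] f_theta_shift[of "r + 1" q] rq(1) by (simp_all add: algebra_simps)
  then show ?thesis
    using equilateral[OF rq(2,3)] by (simp add: Delta_def side_def)
qed

lemma gap_ge: "side / L2 \<le> th (k + 1) - th k"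
proof -
  have "side \<le> L2 * dRZ (th (k + 1)) (th k)"
    using bilip side_eq by metis
  also have "\<dots> \<le> L2 * (th (k + 1) - th k)"
    using L2_pos theta_step[of k] by (intro mult_left_mono dRZ_le_diff) simp_all
  finally show ?thesis
    using L2_pos by (simp add: divide_le_eq mult.commute)
qed

lemma gaps_ge:
  assumes "0 \<le> n"
  shows "of_int n * (side / L2) \<le> th (a + n) - th a"
  using assms
proof (induction n rule: int_ge_induct)
  case (step n)
  have "of_int (n + 1) * (side / L2) = of_int n * (side / L2) + side / L2"
    by (simp add: distrib_right add_divide_distrib)
  then show ?case
    using step.IH gap_ge[of "a + n"] by (simp add: add.assoc)
qed simp

lemma chord_ge: "L1 * side / L2 * of_int (cyclic_abs m (b - a)) \<le> norm (f (th b) - f (th a))"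
proof -
  define k where "k = (b - a) mod int m"
  define D where "D = th (a + k) - th a"
  define \<gamma> where "\<gamma> = side / L2"
  have k: "0 \<le> k" "k < int m"
    unfolding k_def using m_pos by simp_all
  have "b = (a + k) + (b - a) div int m * int m"
    unfolding k_def by simp
  then have f_b: "f (th b) = f (th (a + k))"
    by (metis f_theta_shift)
  have th_a_m: "th (a + k + (int m - k)) = th a + 1"
    using cyclic[of a] by simp
  have D_range: "0 \<le> D" "D < 1"
    unfolding D_def using theta_le[of a "a + k"] theta_less[of "a + k" "a + int m"] k cyclic[of a]
    by simp_all
  have "\<gamma> * of_int (cyclic_abs m (b - a)) \<le> min D (1 - D)"
  proof -
    have "0 \<le> \<gamma>"
      unfolding \<gamma>_def using side_eq[of 0] L2_pos by (metis divide_nonneg_pos norm_ge_zero)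
    then have "\<gamma> * of_int (min k (int m - k)) \<le> min (of_int k * \<gamma>) (of_int (int m - k) * \<gamma>)"
      by (simp add: mult.commute mult_left_mono)
    moreover have "of_int k * \<gamma> \<le> D" "of_int (int m - k) * \<gamma> \<le> 1 - D"
      using gaps_ge[of k a] gaps_ge[of "int m - k" "a + k"] k th_a_m unfolding D_def \<gamma>_def by simp_all
    ultimately show ?thesis
      unfolding cyclic_abs_def k_def[symmetric] by linarith
  qed
  also have "min D (1 - D) = dRZ (th (a + k)) (th a)"
    using D_range unfolding D_def by (simp add: dRZ_eq_min)
  finally have "L1 * (\<gamma> * of_int (cyclic_abs m (b - a))) \<le> L1 * dRZ (th (a + k)) (th a)"
    using L1_pos by simp
  also have "\<dots> \<le> norm (f (th b) - f (th a))"
    using bilip f_b by metis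
  finally show ?thesis
    unfolding \<gamma>_def by simp
qed

sublocale cyclic_chord_bound "\<lambda>a b. norm (Delta f th a b)" "L1 * side / L2" m
proof
  show "0 \<le> L1 * side / L2"
    using L1_pos L2_pos side_eq[of 0] by (metis divide_nonneg_pos mult_nonneg_nonneg less_imp_le norm_ge_zero)
qed (unfold Delta_def, rule chord_ge)

lemma four_point:
  "(norm (Delta f th i j))\<^sup>2 + (norm (Delta f th (i + 1) (j + 1)))\<^sup>2
    \<le> (norm (Delta f th (i + 1) j))\<^sup>2 + (norm (Delta f th i (j + 1)))\<^sup>2 + 2 * side\<^sup>2"
  using four_point_ineq[of "f (th j)" "f (th i)" "f (th (j + 1))" "f (th (i + 1))"] side_eq[of i] side_eq[of j]
  by (simp add: Delta_def power2_eq_square)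

lemma averaged_bounds:
  assumes "4 \<le> m" and large: "2 * L2\<^sup>2 \<le> (real m - 2) * L1\<^sup>2" and "\<bar>i - j\<bar> \<le> int (m div 2)"
  shows "let Lm = polylen f th m;
          u = (\<lambda>a b. norm (Delta f th a b))
      in Ai u i j \<ge> Lm * L1 / L2 * ((real_of_int \<bar>i - j\<bar> - 1/2) / real m)
       \<and> Ai u i (j + 1) \<ge> Lm * L1 / L2 * ((real_of_int \<bar>i - j\<bar> - 1/2) / real m)
       \<and> Aij u i j \<ge> Lm * L1 / L2 * ((real_of_int \<bar>i - j\<bar> - 1/4) / real m)
       \<and> Aij u i (j + 1) \<ge> Lm * L1 / (2 * L2) * (real_of_int \<bar>i - j\<bar> / real m)"
proof -
  have "2 * \<bar>i - j\<bar> \<le> 2 * int (m div 2)"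
    using assms(3) by simp
  also have "\<dots> \<le> int m"
    by linarith
  finally have ij: "2 * \<bar>i - j\<bar> \<le> int m" .
  have scale: "polylen f th m * L1 / L2 * (z / real m) = L1 * side / L2 * z"
    and scale_half: "polylen f th m * L1 / (2 * L2) * (z / real m) = L1 * side / L2 * z / 2" for z
    unfolding side_def by (simp_all add: field_simps)
  have "2 * side\<^sup>2 = side\<^sup>2 * (2 * L2\<^sup>2) / L2\<^sup>2"
    using L2_pos by simp
  also have "\<dots> \<le> side\<^sup>2 * ((real m - 2) * L1\<^sup>2) / L2\<^sup>2"
    using large by (intro divide_right_mono mult_left_mono) simp_all
  also have "\<dots> = (real m - 2) * (L1 * side / L2)\<^sup>2"
    by (simp add: power2_eq_square)
  finally have "2 * side\<^sup>2 \<le> (real m - 2) * (L1 * side / L2)\<^sup>2" .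
  with assms(1) show ?thesis
    unfolding Let_def scale scale_half
    using Ai_ge[OF ij] Ai_succ_ge[OF ij] Aij_ge[OF _ ij four_point] Aij_succ_ge[OF assms(1) ij]
    by simp
qed

end

theorem mainTheorem5:
  fixes f :: "real \<Rightarrow> real ^ 'n"
    and L1 L2 :: real
    and \<theta> :: "nat \<Rightarrow> int \<Rightarrow> real"
  assumes periodic: "\<And>t. f (t + 1) = f t"
    and L1pos: "0 < L1" and L12: "L1 \<le> L2"
    and bilip: "\<And>s t. L1 * dRZ s t \<le> norm (f s - f t) \<and> norm (f s - f t) \<le> L2 * dRZ s t"
    and nonneg: "\<And>m. m \<ge> 1 \<Longrightarrow> 0 \<le> \<theta> m 1"
    and incr: "\<And>m k. m \<ge> 1 \<Longrightarrow> 1 \<le> k \<Longrightarrow> k < int m \<Longrightarrow> \<theta> m k < \<theta> m (k + 1)"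
    and below1: "\<And>m. m \<ge> 1 \<Longrightarrow> \<theta> m (int m) < 1"
    and cyclic: "\<And>m k. m \<ge> 1 \<Longrightarrow> \<theta> m (k + int m) = \<theta> m k + 1"
    and equilateral: "\<And>m k. m \<ge> 1 \<Longrightarrow> 1 \<le> k \<Longrightarrow> k \<le> int m \<Longrightarrow>
        norm (Delta f (\<theta> m) k (k + 1)) = polylen f (\<theta> m) m / real m"
  shows "\<exists>M. \<forall>m\<ge>M. \<forall>i j :: int. \<bar>i - j\<bar> \<le> int (m div 2) \<longrightarrow>
     (let Lm = polylen f (\<theta> m) m;
          u = (\<lambda>a b. norm (Delta f (\<theta> m) a b))
      in Ai u i j \<ge> Lm * L1 / L2 * ((real_of_int \<bar>i - j\<bar> - 1/2) / real m)
       \<and> Ai u i (j + 1) \<ge> Lm * L1 / L2 * ((real_of_int \<bar>i - j\<bar> - 1/2) / real m)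
       \<and> Aij u i j \<ge> Lm * L1 / L2 * ((real_of_int \<bar>i - j\<bar> - 1/4) / real m)
       \<and> Aij u i (j + 1) \<ge> Lm * L1 / (2 * L2) * (real_of_int \<bar>i - j\<bar> / real m))"
proof -
  obtain N :: nat where N: "2 * L2\<^sup>2 / L1\<^sup>2 + 2 < real N"
    using reals_Archimedean2 by blast
  have polygon: "equilateral_polygon f L1 L2 (\<theta> m) m" if "1 \<le> m" for m
    using that by unfold_locales (simp_all add: periodic L1pos L12 bilip nonneg incr below1 cyclic equilateral)
  have large: "2 * L2\<^sup>2 \<le> (real m - 2) * L1\<^sup>2" if "N \<le> m" for m
  proof -
    have "2 * L2\<^sup>2 / L1\<^sup>2 < real m - 2"
      using N that by linarith
    then show ?thesis
      using L1pos by (simp add: pos_divide_less_eq)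
  qed
  show ?thesis
    by (intro exI[of _ "max 4 N"] allI impI equilateral_polygon.averaged_bounds polygon large) auto
qed

end
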